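(* Let $X$ be a real Banach space and $W,Y$ closed subspaces with $W\subseteq Y\subseteq X$. If $Y$ has property-$(HB)$ in $X$, then $Y/W$ has property-$(HB)$ in $X/W$.
   Context: For a closed subspace $V$ of a Banach space $E$, $V^\perp=\{e^*\in E^*:e^*|_V=0\}$. $V$ has property-$(HB)$ in $E$ if there is a linear projection $P$ on $E^*$ with range $V^\perp$ and $\|P\|=1$ such that, writing $G=(I-P)(E^* )$, for every $e^*=v^\#+v^\perp$ with $v^\#\in G$, $0\neq v^\perp\in V^\perp$, one has $\|e^*\|>\|v^\#\|$ and $\|e^*\|\ge\|v^\perp\|$. $Y/W$ is regarded as a subspace of $X/W$ with the quotient norm. *)

theory Defs
  imports "HOL-Analysis.Analysis"
begin

definition annihilator :: "'a::real_normed_vector set \<Rightarrow> ('a \<Rightarrow>\<^sub>L real) set" where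
  "annihilator V = {f. \<forall>v\<in>V. blinfun_apply f v = 0}"

definition property_HB :: "'a::real_normed_vector set \<Rightarrow> bool" where
  "property_HB V \<longleftrightarrow>
     (\<exists>P :: ('a \<Rightarrow>\<^sub>L real) \<Rightarrow> ('a \<Rightarrow>\<^sub>L real).
        bounded_linear P \<and> P \<circ> P = P \<and> range P = annihilator V \<and> onorm P = 1 \<and>
        (\<forall>vs \<in> range (\<lambda>e. e - P e). \<forall>vp \<in> annihilator V. vp \<noteq> 0 \<longrightarrow>
            norm (vs + vp) > norm vs \<and> norm (vs + vp) \<ge> norm vp))"

text \<open>q : X \<rightarrow> Q realises Q as the quotient space X/W with the quotient norm.\<close>
definition is_quotient_map :: "('a::real_normed_vector \<Rightarrow> 'b::real_normed_vector) \<Rightarrow> 'a set \<Rightarrow> bool" where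
  "is_quotient_map q W \<longleftrightarrow> linear q \<and> surj q \<and> {x. q x = 0} = W \<and>
     (\<forall>x. norm (q x) = infdist x W)"

end

theory Submission
  imports Defs
begin

text \<open>The adjoint \<open>g \<mapsto> g \<circ> q\<close> of the quotient map \<open>q : X \<rightarrow> X/W\<close> is a linear isometry of
  \<open>(X/W)*\<close> onto \<open>W\<^sup>\<perp>\<close>. Since \<open>Y\<^sup>\<perp> \<subseteq> W\<^sup>\<perp>\<close>, an (HB)-projection \<open>P\<close> of \<open>X*\<close> onto \<open>Y\<^sup>\<perp>\<close> can be
  conjugated by this isometry into a projection of \<open>(X/W)*\<close> onto \<open>(Y/W)\<^sup>\<perp>\<close>, and all the
  norm conditions of property-(HB) are invariant under the conjugation.\<close>

definition HB_projection :: "('e::real_normed_vector \<Rightarrow> 'e) \<Rightarrow> 'e set \<Rightarrow> bool" where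
  "HB_projection P A \<longleftrightarrow>
     bounded_linear P \<and> P \<circ> P = P \<and> range P = A \<and> onorm P = 1 \<and>
     (\<forall>vs \<in> range (\<lambda>e. e - P e). \<forall>vp \<in> A. vp \<noteq> 0 \<longrightarrow>
        norm (vs + vp) > norm vs \<and> norm (vs + vp) \<ge> norm vp)"

lemma property_HB_iff_HB_projection:
  "property_HB V \<longleftrightarrow> (\<exists>P. HB_projection P (annihilator V))"
  unfolding property_HB_def HB_projection_def ..

lemma linear_isometry_inj:
  assumes "linear T" and "\<And>x. norm (T x) = norm x"
  shows "inj T"
proof (rule injI)
  fix x y assume "T x = T y"
  then have "norm (x - y) = 0"
    using assms by (metis linear_diff norm_zero right_minus_eq)
  then show "x = y" by simp
qed

lemma HB_projection_intertwined:
  fixes T :: "'f::real_normed_vector \<Rightarrow> 'e::real_normed_vector"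
  assumes T: "linear T" and isometric: "\<And>x. norm (T x) = norm x"
    and P: "HB_projection P A" and A: "A \<subseteq> range T"
    and intertwined: "\<And>x. T (S x) = P (T x)"
  shows "HB_projection S (T -` A)"
proof -
  interpret T: linear T by (rule T)
  have blP: "bounded_linear P" and idem: "P \<circ> P = P" and rangeP: "range P = A"
    and "onorm P = 1"
    and HB: "\<And>vs vp. vs \<in> range (\<lambda>e. e - P e) \<Longrightarrow> vp \<in> A \<Longrightarrow> vp \<noteq> 0 \<Longrightarrow>
        norm (vs + vp) > norm vs \<and> norm (vs + vp) \<ge> norm vp"
    using P by (auto simp: HB_projection_def)
  interpret P: bounded_linear P by (rule blP)
  have T_inj: "x = y" if "T x = T y" for x y
    using linear_isometry_inj[OF T isometric] that by (rule injD)
  have P_idem: "P (P y) = P y" for y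
    using idem by (metis comp_apply)
  have P_fix: "P a = a" if "a \<in> A" for a
    using that P_idem unfolding rangeP[symmetric] by blast
  have norm_S: "norm (S x) \<le> norm x" for x
    using onorm[OF blP, of "T x"] by (simp add: intertwined[symmetric] isometric \<open>onorm P = 1\<close>)
  have "bounded_linear S"
  proof (rule bounded_linear_intro[where K = 1])
    show "S (x + y) = S x + S y" for x y
      by (rule T_inj) (simp add: intertwined T.add P.add)
    show "S (r *\<^sub>R x) = r *\<^sub>R S x" for r x
      by (rule T_inj) (simp add: intertwined T.scale P.scaleR)
  qed (simp add: norm_S)
  note blS = this
  moreover have "S \<circ> S = S"
    by (rule ext, rule T_inj) (simp add: intertwined P_idem)
  moreover have "range S = T -` A"
  proof (intro subset_antisym subsetI)
    show "y \<in> T -` A" if "y \<in> range S" for y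
      using that rangeP by (auto simp: intertwined)
    show "x \<in> range S" if "x \<in> T -` A" for x
      using that T_inj[of "S x" x] by (simp add: intertwined P_fix) (metis rangeI)
  qed
  moreover have "onorm S = 1"
  proof (rule antisym)
    show "onorm S \<le> 1"
      using norm_S by (intro onorm_bound) simp_all
    have "P \<noteq> (\<lambda>y. 0)"
      using \<open>onorm P = 1\<close> by (auto simp: onorm_zero)
    then obtain y where "P y \<noteq> 0"
      by auto
    moreover have "P y \<in> range T"
      using A rangeP by blast
    then obtain x where x: "T x = P y"
      by (metis rangeE)
    ultimately have "x \<noteq> 0"
      using linear_0[OF T] by auto
    moreover have "S x = x"
      by (rule T_inj) (simp add: intertwined x P_idem)
    ultimately show "1 \<le> onorm S"
      using onorm[OF blS, of x] by simp
  qed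
  moreover have "norm (vs + vp) > norm vs \<and> norm (vs + vp) \<ge> norm vp"
    if vs: "vs \<in> range (\<lambda>e. e - S e)" and vp: "vp \<in> T -` A" "vp \<noteq> 0" for vs vp
  proof -
    obtain e where "vs = e - S e" using vs by blast
    then have "T vs \<in> range (\<lambda>e. e - P e)"
      by (simp add: T.diff intertwined)
    moreover have "T vp \<noteq> 0"
      using vp(2) isometric[of vp] by auto
    ultimately show ?thesis
      using HB[of "T vs" "T vp"] vp(1) by (simp add: T.add[symmetric] isometric)
  qed
  ultimately show ?thesis
    unfolding HB_projection_def by blast
qed

lemma HB_projection_conjugate:
  fixes T :: "'f::real_normed_vector \<Rightarrow> 'e::real_normed_vector"
  assumes T: "linear T" and isometric: "\<And>x. norm (T x) = norm x"
    and P: "HB_projection P A" and A: "A \<subseteq> range T"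
  shows "HB_projection (inv T \<circ> P \<circ> T) (T -` A)"
proof (rule HB_projection_intertwined[OF T isometric P A])
  have "P y \<in> range T" for y
    using P A by (auto simp: HB_projection_def)
  then show "T ((inv T \<circ> P \<circ> T) x) = P (T x)" for x
    by (simp add: f_inv_into_f)
qed

lemma annihilator_antimono: "V \<subseteq> U \<Longrightarrow> annihilator U \<subseteq> annihilator V"
  by (auto simp: annihilator_def)

lemma annihilator_abs_le_infdist:
  assumes "W \<noteq> {}" and f: "f \<in> annihilator W"
  shows "\<bar>f x\<bar> \<le> norm f * infdist x W"
proof (cases "f = 0")
  case False
  then have "norm f > 0" by simp
  have "\<bar>f x\<bar> / norm f \<le> infdist x W"
    unfolding infdist_notempty[OF \<open>W \<noteq> {}\<close>]
  proof (rule cINF_greatest[OF \<open>W \<noteq> {}\<close>])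
    fix w assume "w \<in> W"
    then have "f x = f (x - w)"
      using f by (simp add: annihilator_def blinfun.diff_right)
    also have "\<bar>\<dots>\<bar> \<le> norm f * norm (x - w)"
      using norm_blinfun[of f "x - w"] by simp
    finally show "\<bar>f x\<bar> / norm f \<le> dist x w"
      using \<open>norm f > 0\<close> by (simp add: dist_norm field_simps)
  qed
  then show ?thesis
    using \<open>norm f > 0\<close> by (simp add: field_simps)
qed (simp add: infdist_nonneg)

lemma is_quotient_map_eq_0_iff:
  "is_quotient_map q W \<Longrightarrow> q x = 0 \<longleftrightarrow> x \<in> W"
  by (auto simp: is_quotient_map_def)

lemma is_quotient_map_zero_mem:
  "is_quotient_map q W \<Longrightarrow> 0 \<in> W"
  by (auto simp: is_quotient_map_def linear_0)

lemma is_quotient_map_norm_le: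
  assumes "is_quotient_map q W"
  shows "norm (q x) \<le> norm x"
  using assms infdist_le[OF is_quotient_map_zero_mem[OF assms], of x]
  by (simp add: is_quotient_map_def dist_norm)

lemma is_quotient_map_bounded_linear:
  assumes "is_quotient_map q W"
  shows "bounded_linear q"
  using assms is_quotient_map_norm_le[OF assms]
  unfolding bounded_linear_def bounded_linear_axioms_def is_quotient_map_def
  by (metis mult.right_neutral)

lemma annihilator_abs_le_norm_quotient_map:
  assumes "is_quotient_map q W" and "f \<in> annihilator W"
  shows "\<bar>f x\<bar> \<le> norm f * norm (q x)"
  using annihilator_abs_le_infdist[of W f x] assms is_quotient_map_zero_mem[OF assms(1)]
  by (auto simp: is_quotient_map_def)

lemma annihilator_apply_eq_if_quotient_map_eq:
  assumes q: "is_quotient_map q W" and f: "f \<in> annihilator W" and "q a = q b"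
  shows "f a = f b"
proof -
  have "q (a - b) = 0"
    using q \<open>q a = q b\<close> by (simp add: is_quotient_map_def linear_diff)
  then have "f (a - b) = 0"
    using q f by (simp add: is_quotient_map_eq_0_iff annihilator_def)
  then show ?thesis
    by (simp add: blinfun.diff_right)
qed

lemma norm_blinfun_compose_quotient_map:
  fixes g :: "'b::real_normed_vector \<Rightarrow>\<^sub>L real"
  assumes q: "is_quotient_map q W"
  shows "norm (g o\<^sub>L Blinfun q) = norm g"
proof (rule antisym)
  note Blinfun_q = bounded_linear_Blinfun_apply[OF is_quotient_map_bounded_linear[OF q]]
  have "norm (Blinfun q) \<le> 1"
    using is_quotient_map_norm_le[OF q] by (intro norm_blinfun_bound) (simp_all add: Blinfun_q)
  then show "norm (g o\<^sub>L Blinfun q) \<le> norm g"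
    using norm_blinfun_compose[of g "Blinfun q"] by (metis mult_left_mono mult.right_neutral
        norm_ge_zero order_trans)
  have "g o\<^sub>L Blinfun q \<in> annihilator W"
    by (auto simp: annihilator_def Blinfun_q is_quotient_map_eq_0_iff[OF q, symmetric])
  show "norm g \<le> norm (g o\<^sub>L Blinfun q)"
  proof (rule norm_blinfun_bound)
    fix z
    obtain x where "z = q x"
      using q by (auto simp: is_quotient_map_def)
    then show "norm (g z) \<le> norm (g o\<^sub>L Blinfun q) * norm z"
      using annihilator_abs_le_norm_quotient_map[OF q \<open>g o\<^sub>L Blinfun q \<in> annihilator W\<close>, of x]
      by (simp add: Blinfun_q)
  qed simp
qed

lemma annihilator_subset_range_compose_quotient_map:
  assumes q: "is_quotient_map q W"
  shows "annihilator W \<subseteq> range (\<lambda>g :: 'b::real_normed_vector \<Rightarrow>\<^sub>L real. g o\<^sub>L Blinfun q)"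
proof
  fix f assume f: "f \<in> annihilator W"
  interpret q: bounded_linear q
    using q by (rule is_quotient_map_bounded_linear)
  have q_inv: "q (inv q z) = z" for z
    using q by (simp add: is_quotient_map_def surj_f_inv_f)
  note f_eq = annihilator_apply_eq_if_quotient_map_eq[OF q f]
  have "bounded_linear (\<lambda>z. f (inv q z))"
  proof (rule bounded_linear_intro[where K = "norm f"])
    show "f (inv q (a + b)) = f (inv q a) + f (inv q b)" for a b
      using f_eq[of "inv q (a + b)" "inv q a + inv q b"]
      by (simp add: q_inv q.add blinfun.add_right)
    show "f (inv q (r *\<^sub>R a)) = r *\<^sub>R f (inv q a)" for r a
      using f_eq[of "inv q (r *\<^sub>R a)" "r *\<^sub>R inv q a"]
      by (simp add: q_inv q.scaleR blinfun.scaleR_right)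
    show "norm (f (inv q z)) \<le> norm z * norm f" for z
      using annihilator_abs_le_norm_quotient_map[OF q f, of "inv q z"]
      by (simp add: q_inv mult.commute)
  qed
  then have "Blinfun (\<lambda>z. f (inv q z)) o\<^sub>L Blinfun q = f"
    by (intro blinfun_eqI) (simp add: bounded_linear_Blinfun_apply q.bounded_linear f_eq[OF q_inv])
  then show "f \<in> range (\<lambda>g. g o\<^sub>L Blinfun q)"
    by (metis rangeI)
qed

theorem theorem3p10:
  fixes W Y :: "'a::banach set"
    and q :: "'a \<Rightarrow> 'b::banach"
  assumes "subspace W" and "closed W"
    and "subspace Y" and "closed Y"
    and "W \<subseteq> Y"
    and "property_HB Y"
    and "is_quotient_map q W"
  shows "property_HB (q ` Y)"
proof -
  define T :: "('b \<Rightarrow>\<^sub>L real) \<Rightarrow> ('a \<Rightarrow>\<^sub>L real)" where "T g = g o\<^sub>L Blinfun q" for g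
  have q: "bounded_linear q"
    using \<open>is_quotient_map q W\<close> by (rule is_quotient_map_bounded_linear)
  obtain P where P: "HB_projection P (annihilator Y)"
    using \<open>property_HB Y\<close> by (auto simp: property_HB_iff_HB_projection)
  have "linear T"
    unfolding T_def by (intro bounded_linear.linear bounded_bilinear.bounded_linear_left
        bounded_bilinear_blinfun_compose)
  moreover have "norm (T g) = norm g" for g
    unfolding T_def using \<open>is_quotient_map q W\<close> by (rule norm_blinfun_compose_quotient_map)
  moreover have "annihilator Y \<subseteq> range T"
    using annihilator_antimono[OF \<open>W \<subseteq> Y\<close>]
      annihilator_subset_range_compose_quotient_map[OF \<open>is_quotient_map q W\<close>]
    unfolding T_def by blast
  moreover have "T -` annihilator Y = annihilator (q ` Y)"
    by (auto simp: T_def annihilator_def bounded_linear_Blinfun_apply[OF q])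
  ultimately have "HB_projection (inv T \<circ> P \<circ> T) (annihilator (q ` Y))"
    using HB_projection_conjugate[OF _ _ P] by metis
  then show ?thesis
    unfolding property_HB_iff_HB_projection by blast
qed

end
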